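(* The Clebsch graph has odd girth $5$, and it admits an orientation in which every $5$-cycle is alternating.
   Context: The Clebsch graph (Greenwood–Gleason graph) is the $5$-regular graph on vertex set $\{0,1\}^4$ in which two vectors are adjacent iff they differ in exactly one coordinate or in all four coordinates. The odd girth is the length of a shortest odd cycle. An orientation assigns each edge exactly one direction. In an oriented graph, a subgraph that is a cycle is called alternating if at most one of its vertices has both positive in-degree and positive out-degree within that cycle. *)

theory Defs
  imports Main
begin

definition clebsch_vertices :: "bool list set" where
  "clebsch_vertices = {v. length v = 4}"

definition clebsch_adj :: "bool list \<Rightarrow> bool list \<Rightarrow> bool" where
  "clebsch_adj u v \<longleftrightarrow> u \<in> clebsch_vertices \<and> v \<in> clebsch_vertices \<and>
     (card {i. i < 4 \<and> u ! i \<noteq> v ! i} = 1 \<or> card {i. i < 4 \<and> u ! i \<noteq> v ! i} = 4)"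

definition is_cycle :: "'a set \<Rightarrow> ('a \<Rightarrow> 'a \<Rightarrow> bool) \<Rightarrow> 'a list \<Rightarrow> bool" where
  "is_cycle V E c \<longleftrightarrow> length c \<ge> 3 \<and> distinct c \<and> set c \<subseteq> V \<and>
     (\<forall>i < length c. E (c ! i) (c ! ((i + 1) mod length c)))"

definition has_odd_cycle :: "'a set \<Rightarrow> ('a \<Rightarrow> 'a \<Rightarrow> bool) \<Rightarrow> bool" where
  "has_odd_cycle V E \<longleftrightarrow> (\<exists>c. is_cycle V E c \<and> odd (length c))"

text \<open>Odd girth: the length of a shortest odd cycle (meaningful when an odd cycle exists).\<close>
definition odd_girth :: "'a set \<Rightarrow> ('a \<Rightarrow> 'a \<Rightarrow> bool) \<Rightarrow> nat" where
  "odd_girth V E = (LEAST k. odd k \<and> (\<exists>c. is_cycle V E c \<and> length c = k))"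

definition is_orientation :: "'a set \<Rightarrow> ('a \<Rightarrow> 'a \<Rightarrow> bool) \<Rightarrow> ('a \<Rightarrow> 'a \<Rightarrow> bool) \<Rightarrow> bool" where
  "is_orientation V E D \<longleftrightarrow>
     (\<forall>u v. D u v \<longrightarrow> E u v) \<and>
     (\<forall>u\<in>V. \<forall>v\<in>V. E u v \<longrightarrow> (D u v \<noteq> D v u))"

definition cyc_in :: "('a \<Rightarrow> 'a \<Rightarrow> bool) \<Rightarrow> 'a list \<Rightarrow> nat \<Rightarrow> bool" where
  "cyc_in D c i \<longleftrightarrow> (let n = length c in
     D (c ! ((i + n - 1) mod n)) (c ! i) \<or> D (c ! ((i + 1) mod n)) (c ! i))"

definition cyc_out :: "('a \<Rightarrow> 'a \<Rightarrow> bool) \<Rightarrow> 'a list \<Rightarrow> nat \<Rightarrow> bool" where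
  "cyc_out D c i \<longleftrightarrow> (let n = length c in
     D (c ! i) (c ! ((i + n - 1) mod n)) \<or> D (c ! i) (c ! ((i + 1) mod n)))"

definition alternating :: "('a \<Rightarrow> 'a \<Rightarrow> bool) \<Rightarrow> 'a list \<Rightarrow> bool" where
  "alternating D c \<longleftrightarrow> card {i. i < length c \<and> cyc_in D c i \<and> cyc_out D c i} \<le> 1"

end

theory Submission
  imports Defs
begin

text \<open>The Clebsch graph is the 4-cube together with the perfect matching of antipodal pairs.
  Cube edges change the parity of the Hamming weight, antipodal edges preserve it, and two
  antipodal edges never meet. So the number of antipodal edges on an odd cycle is odd, and on a
  cycle of length 3 or 5 it is exactly one. A triangle is then impossible, because two cube steps
  reach Hamming distance at most 2, not 4.

  Orient every cube edge from its even-weight end to its odd-weight end. On a 5-cycle the three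
  vertices away from the antipodal edge are sources or sinks of the cycle. The two ends of the
  antipodal edge have the same parity, so both are sources or both are sinks with respect to their
  cube edges, and only one of them acquires an arc of the other kind from the antipodal edge.
  Hence the antipodal edges may be oriented arbitrarily; below they are oriented by the first
  coordinate.\<close>

fun hamming :: "'a list \<Rightarrow> 'a list \<Rightarrow> nat" where
  "hamming (x # xs) (y # ys) = (if x = y then 0 else 1) + hamming xs ys"
| "hamming _ _ = 0"

lemma hamming_commute: "hamming u v = hamming v u"
  by (induction u v rule: hamming.induct) auto

lemma hamming_le_length: "hamming u v \<le> length u"
  by (induction u v rule: hamming.induct) auto

lemma card_differences_eq_hamming:
  "length u = length v \<Longrightarrow> card {i. i < length u \<and> u ! i \<noteq> v ! i} = hamming u v"
proof (induction u v rule: list_induct2)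
  case Nil
  then show ?case by simp
next
  case (Cons x xs y ys)
  let ?M = "{i. i < length (x # xs) \<and> (x # xs) ! i \<noteq> (y # ys) ! i}"
  have tail: "{k. Suc k \<in> ?M \<and> k < length xs} = {i. i < length xs \<and> xs ! i \<noteq> ys ! i}"
    by auto
  show ?case
  proof (cases "x = y")
    case True
    then have "0 \<notin> ?M" by simp
    from card_less_Suc2[OF this, of "length xs"] show ?thesis
      using Cons.IH True tail by (simp add: conj_commute)
  next
    case False
    then have "0 \<in> ?M" by simp
    from card_less_Suc[OF this, of "length xs"] show ?thesis
      using Cons.IH False tail by (simp add: conj_commute)
  qed
qed

lemma hamming_triangle:
  "length u = length v \<Longrightarrow> length v = length w \<Longrightarrow> hamming u w \<le> hamming u v + hamming v w"
  by (induction u v w rule: list_induct3) auto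

lemma odd_hamming_iff:
  "length u = length v \<Longrightarrow>
     odd (hamming u v) \<longleftrightarrow> odd (count_list u True) \<noteq> odd (count_list v True)"
  by (induction u v rule: list_induct2) auto

lemma hamming_eq_length_iff:
  "length u = length v \<Longrightarrow> hamming u v = length u \<longleftrightarrow> v = map Not u"
proof (induction u v rule: list_induct2)
  case (Cons x xs y ys)
  then show ?case using hamming_le_length[of xs ys] by auto
qed simp

lemma is_cycle_3D:
  assumes "is_cycle V E [a, b, c]"
  shows "E a b" "E b c" "E c a" "distinct [a, b, c]"
  using assms unfolding is_cycle_def by (simp_all add: All_less_Suc2)

lemma is_cycle_5D:
  assumes "is_cycle V E [a, b, c, d, e]"
  shows "E a b" "E b c" "E c d" "E d e" "E e a" "distinct [a, b, c, d, e]"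
  using assms unfolding is_cycle_def by (simp_all add: All_less_Suc2)

definition transit :: "('a \<Rightarrow> 'a \<Rightarrow> bool) \<Rightarrow> 'a \<Rightarrow> 'a \<Rightarrow> 'a \<Rightarrow> bool" where
  "transit D x y z \<longleftrightarrow> (D x y \<or> D z y) \<and> (D y x \<or> D y z)"

lemma card_Collect_less_eq_length_filter: "card {i. i < n \<and> P i} = length (filter P [0..<n])"
proof -
  have "{i. i < n \<and> P i} = set (filter P [0..<n])" by auto
  then show ?thesis by (metis distinct_card distinct_filter distinct_upt)
qed

lemma alternating_5_iff:
  "alternating D [a, b, c, d, e] \<longleftrightarrow>
     length (filter id [transit D e a b, transit D a b c, transit D b c d,
                        transit D c d e, transit D d e a]) \<le> 1"
  by (simp add: alternating_def card_Collect_less_eq_length_filter upt_rec cyc_in_def cyc_out_def transit_def)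

lemma alternating_5_rotate: "alternating D [a, b, c, d, e] \<longleftrightarrow> alternating D [b, c, d, e, a]"
  unfolding alternating_5_iff by simp

definition cube_edge :: "bool list \<Rightarrow> bool list \<Rightarrow> bool" where
  "cube_edge u v \<longleftrightarrow> clebsch_adj u v \<and> hamming u v = 1"

definition antipodal_edge :: "bool list \<Rightarrow> bool list \<Rightarrow> bool" where
  "antipodal_edge u v \<longleftrightarrow> clebsch_adj u v \<and> hamming u v = 4"

lemma clebsch_adj_iff:
  "clebsch_adj u v \<longleftrightarrow> length u = 4 \<and> length v = 4 \<and> (hamming u v = 1 \<or> hamming u v = 4)"
proof (cases "length u = 4 \<and> length v = 4")
  case True
  then have "card {i. i < 4 \<and> u ! i \<noteq> v ! i} = hamming u v"
    using card_differences_eq_hamming[of u v] by simp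
  then show ?thesis
    by (simp add: clebsch_adj_def clebsch_vertices_def)
qed (auto simp: clebsch_adj_def clebsch_vertices_def)

lemma clebsch_adj_cases: "clebsch_adj u v \<longleftrightarrow> cube_edge u v \<or> antipodal_edge u v"
  by (auto simp: cube_edge_def antipodal_edge_def clebsch_adj_iff)

lemma clebsch_adj_commute: "clebsch_adj u v \<longleftrightarrow> clebsch_adj v u"
  by (auto simp: clebsch_adj_iff hamming_commute)

lemma cube_edge_commute: "cube_edge u v \<longleftrightarrow> cube_edge v u"
  by (simp add: cube_edge_def clebsch_adj_commute hamming_commute)

lemma antipodal_edge_commute: "antipodal_edge u v \<longleftrightarrow> antipodal_edge v u"
  by (simp add: antipodal_edge_def clebsch_adj_commute hamming_commute)

lemma cube_edge_not_antipodal: "cube_edge u v \<Longrightarrow> \<not> antipodal_edge u v"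
  by (simp add: cube_edge_def antipodal_edge_def)

lemma cube_edge_iff_not_antipodal: "clebsch_adj u v \<Longrightarrow> cube_edge u v \<longleftrightarrow> \<not> antipodal_edge u v"
  using clebsch_adj_cases cube_edge_not_antipodal by blast

lemma antipodal_edge_iff: "antipodal_edge u v \<longleftrightarrow> length u = 4 \<and> v = map Not u"
  using hamming_eq_length_iff[of u v] by (auto simp: antipodal_edge_def clebsch_adj_iff)

lemma antipodal_edge_unique: "antipodal_edge x y \<Longrightarrow> antipodal_edge y z \<Longrightarrow> x = z"
  by (auto simp: antipodal_edge_iff comp_def)

lemma cube_edge_parity:
  "cube_edge u v \<Longrightarrow> even (count_list u True) \<longleftrightarrow> odd (count_list v True)"
  using odd_hamming_iff[of u v] by (auto simp: cube_edge_def clebsch_adj_iff)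

lemma antipodal_edge_parity:
  "antipodal_edge u v \<Longrightarrow> even (count_list u True) \<longleftrightarrow> even (count_list v True)"
  using odd_hamming_iff[of u v] by (auto simp: antipodal_edge_def clebsch_adj_iff)

lemma antipodal_edge_iff_same_parity:
  "clebsch_adj u v \<Longrightarrow> antipodal_edge u v \<longleftrightarrow> (even (count_list u True) \<longleftrightarrow> even (count_list v True))"
  using clebsch_adj_cases cube_edge_parity antipodal_edge_parity by blast

lemma no_antipodal_edge_after_two_cube_edges:
  assumes "cube_edge x y" "cube_edge y z"
  shows "\<not> antipodal_edge x z"
proof
  assume "antipodal_edge x z"
  moreover have "hamming x z \<le> 2"
    using assms hamming_triangle[of x y z] by (auto simp: cube_edge_def clebsch_adj_iff)
  ultimately show False by (simp add: antipodal_edge_def)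
qed

definition clebsch_orient :: "bool list \<Rightarrow> bool list \<Rightarrow> bool" where
  "clebsch_orient u v \<longleftrightarrow>
     (cube_edge u v \<and> even (count_list u True)) \<or> (antipodal_edge u v \<and> hd u)"

lemma clebsch_orient_cube_edge:
  "cube_edge u v \<Longrightarrow> clebsch_orient u v \<longleftrightarrow> even (count_list u True)"
  by (auto simp: clebsch_orient_def dest: cube_edge_not_antipodal)

lemma clebsch_orient_antipodal_edge:
  "antipodal_edge u v \<Longrightarrow> clebsch_orient u v \<longleftrightarrow> hd u"
  by (auto simp: clebsch_orient_def dest: cube_edge_not_antipodal)

lemma clebsch_orient_flip:
  assumes "clebsch_adj u v"
  shows "clebsch_orient v u \<longleftrightarrow> \<not> clebsch_orient u v"
  using assms unfolding clebsch_adj_cases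
proof
  assume "cube_edge u v"
  then show ?thesis
    using cube_edge_parity[of u v] cube_edge_commute[of u v]
    by (simp add: clebsch_orient_cube_edge)
next
  assume uv: "antipodal_edge u v"
  then have "u \<noteq> []" "v = map Not u" by (auto simp: antipodal_edge_iff)
  then show ?thesis
    using uv antipodal_edge_commute[of u v]
    by (simp add: clebsch_orient_antipodal_edge hd_map)
qed

lemma clebsch_orient_is_orientation:
  "is_orientation clebsch_vertices clebsch_adj clebsch_orient"
  using clebsch_orient_flip
  by (auto simp: is_orientation_def clebsch_orient_def clebsch_adj_cases)

lemma not_transit_between_cube_edges:
  "cube_edge x y \<Longrightarrow> cube_edge y z \<Longrightarrow> \<not> transit clebsch_orient x y z"
  using cube_edge_parity[of x y] cube_edge_parity[of y z]
  by (auto simp: transit_def clebsch_orient_cube_edge cube_edge_commute)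

lemma not_transit_at_both_ends_of_antipodal_edge:
  assumes "cube_edge w x" "antipodal_edge x y" "cube_edge y z"
  shows "\<not> (transit clebsch_orient w x y \<and> transit clebsch_orient x y z)"
  using assms cube_edge_parity[of w x] cube_edge_parity[of y z] antipodal_edge_parity[of x y]
    clebsch_orient_flip[of x y]
  by (auto simp: transit_def clebsch_orient_cube_edge cube_edge_commute clebsch_adj_cases)

lemma alternating_if_single_antipodal_edge:
  assumes "cube_edge a b" "cube_edge b c" "cube_edge c d" "cube_edge d e" "antipodal_edge e a"
  shows "alternating clebsch_orient [a, b, c, d, e]"
proof -
  have "\<not> transit clebsch_orient a b c" "\<not> transit clebsch_orient b c d"
    "\<not> transit clebsch_orient c d e"
    using assms by (simp_all add: not_transit_between_cube_edges)
  moreover have "\<not> (transit clebsch_orient d e a \<and> transit clebsch_orient e a b)"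
    using assms by (simp add: not_transit_at_both_ends_of_antipodal_edge)
  ultimately show ?thesis
    unfolding alternating_5_iff by (cases "transit clebsch_orient e a b") simp_all
qed

lemma clebsch_5_cycle_alternating:
  assumes "is_cycle clebsch_vertices clebsch_adj [a, b, c, d, e]"
  shows "alternating clebsch_orient [a, b, c, d, e]"
proof -
  note adj = is_cycle_5D[OF assms]
  have not_consecutive:
    "\<not> (antipodal_edge a b \<and> antipodal_edge b c)" "\<not> (antipodal_edge b c \<and> antipodal_edge c d)"
    "\<not> (antipodal_edge c d \<and> antipodal_edge d e)" "\<not> (antipodal_edge d e \<and> antipodal_edge e a)"
    "\<not> (antipodal_edge e a \<and> antipodal_edge a b)"
    using adj(6) antipodal_edge_unique by auto
  \<comment> \<open>an edge is antipodal iff its ends have equal weight parity, so an odd number of them are\<close>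
  have "cube_edge a b \<and> cube_edge b c \<and> cube_edge c d \<and> cube_edge d e \<and> antipodal_edge e a \<or>
     cube_edge b c \<and> cube_edge c d \<and> cube_edge d e \<and> cube_edge e a \<and> antipodal_edge a b \<or>
     cube_edge c d \<and> cube_edge d e \<and> cube_edge e a \<and> cube_edge a b \<and> antipodal_edge b c \<or>
     cube_edge d e \<and> cube_edge e a \<and> cube_edge a b \<and> cube_edge b c \<and> antipodal_edge c d \<or>
     cube_edge e a \<and> cube_edge a b \<and> cube_edge b c \<and> cube_edge c d \<and> antipodal_edge d e"
    using not_consecutive
    by (simp add: adj(1-5) cube_edge_iff_not_antipodal antipodal_edge_iff_same_parity) argo
  moreover have "alternating clebsch_orient [a, b, c, d, e] \<longleftrightarrow> alternating clebsch_orient [b, c, d, e, a]"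
    "alternating clebsch_orient [a, b, c, d, e] \<longleftrightarrow> alternating clebsch_orient [c, d, e, a, b]"
    "alternating clebsch_orient [a, b, c, d, e] \<longleftrightarrow> alternating clebsch_orient [d, e, a, b, c]"
    "alternating clebsch_orient [a, b, c, d, e] \<longleftrightarrow> alternating clebsch_orient [e, a, b, c, d]"
    using alternating_5_rotate by metis+
  ultimately show ?thesis
    using alternating_if_single_antipodal_edge by blast
qed

lemma clebsch_no_triangle: "\<not> is_cycle clebsch_vertices clebsch_adj [a, b, c]"
proof
  assume "is_cycle clebsch_vertices clebsch_adj [a, b, c]"
  note adj = is_cycle_3D[OF this]
  have not_two_antipodal:
    "\<not> (antipodal_edge a b \<and> antipodal_edge b c)" "\<not> (antipodal_edge b c \<and> antipodal_edge c a)"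
    "\<not> (antipodal_edge c a \<and> antipodal_edge a b)"
    using adj(4) antipodal_edge_unique by auto
  have "cube_edge a b \<and> cube_edge b c \<and> antipodal_edge c a \<or>
     cube_edge b c \<and> cube_edge c a \<and> antipodal_edge a b \<or>
     cube_edge c a \<and> cube_edge a b \<and> antipodal_edge b c"
    using not_two_antipodal
    by (simp add: adj(1-3) cube_edge_iff_not_antipodal antipodal_edge_iff_same_parity) argo
  then show False
    using no_antipodal_edge_after_two_cube_edges antipodal_edge_commute by blast
qed

theorem mainTheorem12:
  shows "has_odd_cycle clebsch_vertices clebsch_adj
       \<and> odd_girth clebsch_vertices clebsch_adj = 5
       \<and> (\<exists>D. is_orientation clebsch_vertices clebsch_adj D \<and>
              (\<forall>c. is_cycle clebsch_vertices clebsch_adj c \<and> length c = 5 \<longrightarrow> alternating D c))"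
proof -
  have five_cycle: "is_cycle clebsch_vertices clebsch_adj
    [[False, False, False, False], [True, False, False, False], [True, True, False, False],
     [True, True, True, False], [True, True, True, True]]"
    by (simp add: is_cycle_def All_less_Suc2 clebsch_adj_iff clebsch_vertices_def)
  have no_short_odd_cycle: "5 \<le> length c" if "is_cycle clebsch_vertices clebsch_adj c" "odd (length c)" for c
  proof -
    have "length c \<noteq> 3"
      using that(1) clebsch_no_triangle by (auto simp: numeral_eq_Suc length_Suc_conv)
    moreover have "3 \<le> length c"
      using that(1) by (simp add: is_cycle_def)
    ultimately show ?thesis
      using that(2) by presburger
  qed
  have "odd_girth clebsch_vertices clebsch_adj = 5"
    unfolding odd_girth_def
    by (rule Least_equality) (use five_cycle no_short_odd_cycle in fastforce)+
  moreover have "alternating clebsch_orient c"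
    if "is_cycle clebsch_vertices clebsch_adj c" "length c = 5" for c
    using that clebsch_5_cycle_alternating by (auto simp: numeral_eq_Suc length_Suc_conv)
  ultimately show ?thesis
    using five_cycle clebsch_orient_is_orientation unfolding has_odd_cycle_def by fastforce
qed

end
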